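(* Let $G=(V,E)$ be a finite graph, $f$ a weight function of one of the two types described in the context (with associated integer $k$), $g(S)=f(S)/|S|$, $\epsilon\ge 0$, and let $S^*$ be a nonempty vertex set maximizing $g$ over nonempty subsets of $V$. Run the local-peeling-optimization algorithm described in the context, and let $u_i$ be the first vertex of $S^*$ that the algorithm removes. Then $u_i$ is not removed during a local trimming step (i.e., it is not in any set $U_2$); it is removed in a main peeling step (in some set $U_1$).
   Context: Let $G=(V,E)$ be a graph; $E[S]$ denotes the edges with both endpoints in $S$. The weight function $f$ is either (Type A, $k=2$) $f(S)=\sum_{u_i\in S}a_i+\sum_{(u_i,u_j)\in E[S]}c_{ij}$ with fixed $a_i\ge 0$, $c_{ij}\ge 0$, or (Type B, $k\ge3$) $f(S)=$ number of $k$-cliques in the induced subgraph $G[S]$. The density is $g(S)=f(S)/|S|$ for nonempty $S$, and the peeling weight of $u\in S$ is $w_u(S)=f(S)-f(S\setminus\{u\})$. Local-peeling-optimization algorithm with parameter $\epsilon\ge0$: set $S_0=V$, $\tau_{\max}=0$, $i=1$. While $S_{i-1}\neq\emptyset$: (1) set $\tau_{\max}\leftarrow\max\{\tau_{\max}, g(S_{i-1})/(k(1+\epsilon))\}$ and $\tau_1=\max\{\tau_{\max},k(1+\epsilon)g(S_{i-1})\}$; (2) main peeling step: $U_1=\{u\in S_{i-1}: w_u(S_{i-1})\le\tau_1\}$, $S_i\leftarrow S_{i-1}\setminus U_1$; (3) local trimming: while there exists $u\in S_i$ with $w_u(S_i)<g(S_i)$, set $\tau_2=\max\{\tau_{\max},g(S_i)\}$,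 $U_2=\{u\in S_i: w_u(S_i)<\tau_2\}$, and $S_i\leftarrow S_i\setminus U_2$; (4) increase $i$ by one. The output is $\arg\max_{S_i}g(S_i)$ over the nonempty sets produced. *)

theory Defs
  imports Complex_Main
begin

definition simple_graph :: "'a set \<Rightarrow> 'a set set \<Rightarrow> bool" where
  "simple_graph V E \<longleftrightarrow> finite V \<and>
     (\<forall>e\<in>E. \<exists>x y. e = {x, y} \<and> x \<noteq> y \<and> x \<in> V \<and> y \<in> V)"

definition typeA_weight :: "'a set set \<Rightarrow> ('a \<Rightarrow> real) \<Rightarrow> ('a set \<Rightarrow> real) \<Rightarrow> 'a set \<Rightarrow> real" where
  "typeA_weight E a c S = (\<Sum>i\<in>S. a i) + (\<Sum>e\<in>{e\<in>E. e \<subseteq> S}. c e)"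

definition clique_count :: "'a set set \<Rightarrow> nat \<Rightarrow> 'a set \<Rightarrow> real" where
  "clique_count E k S = real (card {K. K \<subseteq> S \<and> card K = k \<and>
       (\<forall>x\<in>K. \<forall>y\<in>K. x \<noteq> y \<longrightarrow> {x, y} \<in> E)})"

definition density :: "('a set \<Rightarrow> real) \<Rightarrow> 'a set \<Rightarrow> real" where
  "density f S = f S / real (card S)"

definition peel_weight :: "('a set \<Rightarrow> real) \<Rightarrow> 'a set \<Rightarrow> 'a \<Rightarrow> real" where
  "peel_weight f S u = f S - f (S - {u})"

text \<open>Algorithm state: (in_main_phase, current set S, tau_max).
  A state with True is about to perform step (1)+(2) (the while-loop test and the main
  peeling step); a state with False is inside the local-trimming loop (3).
  One transition = one main peeling step, one local trimming step, or leaving the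
  trimming loop; the final state (True, {}, _) is a fixed point.\<close>
definition lpo_step :: "('a set \<Rightarrow> real) \<Rightarrow> nat \<Rightarrow> real \<Rightarrow> bool \<times> 'a set \<times> real \<Rightarrow> bool \<times> 'a set \<times> real" where
  "lpo_step f k \<epsilon> st = (case st of (main, S, tmax) \<Rightarrow>
     if main then
       (if S = {} then (True, S, tmax)
        else (let tmax' = max tmax (density f S / (real k * (1 + \<epsilon>)));
                  \<tau>1 = max tmax' (real k * (1 + \<epsilon>) * density f S)
              in (False, S - {u \<in> S. peel_weight f S u \<le> \<tau>1}, tmax')))
     else
       (if \<exists>u\<in>S. peel_weight f S u < density f S
        then (let \<tau>2 = max tmax (density f S)
              in (False, S - {u \<in> S. peel_weight f S u < \<tau>2}, tmax))
        else (True, S, tmax)))"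

definition lpo_run :: "('a set \<Rightarrow> real) \<Rightarrow> nat \<Rightarrow> real \<Rightarrow> 'a set \<Rightarrow> nat \<Rightarrow> bool \<times> 'a set \<times> real" where
  "lpo_run f k \<epsilon> V n = ((lpo_step f k \<epsilon>) ^^ n) (True, V, 0)"

end

theory Submission
  imports Defs
begin

(* Both kinds of weight are supermodular, i.e. the peel weight w_u(S) grows with S, and have
   rank k: the sum of w_u(S) over u in S counts every edge or clique at most k times, so it is
   at most k f(S).  If u lies in the densest set Sstar, then f(Sstar - {u}) is at most
   g(Sstar) (|Sstar| - 1), so w_u(Sstar) >= g(Sstar) and hence w_u(S) >= g(Sstar) for every S
   containing Sstar.  Since tau_max and g(S) never exceed g(Sstar), the trimming threshold
   tau_2 cannot remove a vertex of Sstar.  By the rank bound some vertex has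
   w_u(S) <= k g(S) <= tau_1, so every main step removes a vertex, the run empties V, and the
   first vertex of Sstar to disappear must go in a main step. *)

definition rank_bounded_supermodular :: "'a set \<Rightarrow> nat \<Rightarrow> ('a set \<Rightarrow> real) \<Rightarrow> bool" where
  "rank_bounded_supermodular V k f \<longleftrightarrow> f {} = 0 \<and> (\<forall>S\<subseteq>V. 0 \<le> f S) \<and>
     (\<forall>A B u. A \<subseteq> B \<longrightarrow> B \<subseteq> V \<longrightarrow> u \<in> A \<longrightarrow> peel_weight f A u \<le> peel_weight f B u) \<and>
     (\<forall>S\<subseteq>V. (\<Sum>u\<in>S. peel_weight f S u) \<le> real k * f S)"

lemma peel_weight_add:
  "peel_weight (\<lambda>S. f S + g S) S u = peel_weight f S u + peel_weight g S u"
  by (simp add: peel_weight_def)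

lemma rank_bounded_supermodular_add:
  assumes "rank_bounded_supermodular V k f" and "rank_bounded_supermodular V k g"
  shows "rank_bounded_supermodular V k (\<lambda>S. f S + g S)"
  unfolding rank_bounded_supermodular_def peel_weight_add
proof (intro conjI allI impI)
  show "f {} + g {} = 0" using assms by (simp add: rank_bounded_supermodular_def)
  show "0 \<le> f S + g S" if "S \<subseteq> V" for S
    using assms that by (simp add: rank_bounded_supermodular_def)
  show "peel_weight f A u + peel_weight g A u \<le> peel_weight f B u + peel_weight g B u"
    if "A \<subseteq> B" "B \<subseteq> V" "u \<in> A" for A B u
    using assms that unfolding rank_bounded_supermodular_def by (meson add_mono)
  show "(\<Sum>u\<in>S. peel_weight f S u + peel_weight g S u) \<le> real k * (f S + g S)"
    if "S \<subseteq> V" for S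
    using assms that unfolding rank_bounded_supermodular_def
    by (simp add: sum.distrib distrib_left add_mono)
qed

lemma peel_weight_vertex_sum:
  "finite S \<Longrightarrow> u \<in> S \<Longrightarrow> peel_weight (\<lambda>S. \<Sum>i\<in>S. a i) S u = a u"
  by (simp add: peel_weight_def sum.remove)

lemma rank_bounded_supermodular_vertex_sum:
  assumes V: "finite V" and a: "\<forall>i\<in>V. 0 \<le> a i" and k: "1 \<le> k"
  shows "rank_bounded_supermodular V k (\<lambda>S. \<Sum>i\<in>S. a i)"
  unfolding rank_bounded_supermodular_def
proof (intro conjI allI impI)
  show nonneg: "0 \<le> (\<Sum>i\<in>S. a i)" if "S \<subseteq> V" for S
    using a that by (auto intro: sum_nonneg)
  fix S assume SV: "S \<subseteq> V"
  then have "finite S" using V finite_subset by blast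
  then have "(\<Sum>u\<in>S. peel_weight (\<lambda>S. \<Sum>i\<in>S. a i) S u) = (\<Sum>i\<in>S. a i)"
    by (simp add: peel_weight_vertex_sum)
  then show "(\<Sum>u\<in>S. peel_weight (\<lambda>S. \<Sum>i\<in>S. a i) S u) \<le> real k * (\<Sum>i\<in>S. a i)"
    using k nonneg[OF SV] by (simp add: mult_le_cancel_right1)
next
  fix A B u assume "A \<subseteq> B" "B \<subseteq> V" "u \<in> A"
  moreover have "finite B" using V \<open>B \<subseteq> V\<close> finite_subset by blast
  ultimately show "peel_weight (\<lambda>S. \<Sum>i\<in>S. a i) A u \<le> peel_weight (\<lambda>S. \<Sum>i\<in>S. a i) B u"
    by (auto simp: peel_weight_vertex_sum finite_subset)
qed simp

definition hyperedge_weight :: "'a set set \<Rightarrow> ('a set \<Rightarrow> real) \<Rightarrow> 'a set \<Rightarrow> real" where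
  "hyperedge_weight H c S = (\<Sum>h\<in>{h\<in>H. h \<subseteq> S}. c h)"

lemma peel_weight_hyperedge_weight:
  assumes "finite H"
  shows "peel_weight (hyperedge_weight H c) S u = (\<Sum>h\<in>{h\<in>H. h \<subseteq> S \<and> u \<in> h}. c h)"
proof -
  have "{h\<in>H. h \<subseteq> S} = {h\<in>H. h \<subseteq> S - {u}} \<union> {h\<in>H. h \<subseteq> S \<and> u \<in> h}" by blast
  then have "hyperedge_weight H c S
      = hyperedge_weight H c (S - {u}) + (\<Sum>h\<in>{h\<in>H. h \<subseteq> S \<and> u \<in> h}. c h)"
    unfolding hyperedge_weight_def using assms by (auto intro: sum.union_disjoint)
  then show ?thesis unfolding peel_weight_def by simp
qed

lemma rank_bounded_supermodular_hyperedge_weight: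
  assumes H: "finite H" and rank: "\<forall>h\<in>H. h \<noteq> {} \<and> card h \<le> k" and c: "\<forall>h\<in>H. 0 \<le> c h"
  shows "rank_bounded_supermodular V k (hyperedge_weight H c)"
  unfolding rank_bounded_supermodular_def peel_weight_hyperedge_weight[OF H]
proof (intro conjI allI impI)
  show "hyperedge_weight H c {} = 0"
    using rank by (auto simp: hyperedge_weight_def intro: sum.neutral)
  show nonneg: "0 \<le> hyperedge_weight H c S" for S
    using c by (auto simp: hyperedge_weight_def intro: sum_nonneg)
  show "(\<Sum>h\<in>{h\<in>H. h \<subseteq> A \<and> u \<in> h}. c h) \<le> (\<Sum>h\<in>{h\<in>H. h \<subseteq> B \<and> u \<in> h}. c h)"
    if "A \<subseteq> B" for A B u
    using that H c by (intro sum_mono2) auto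
  show "(\<Sum>u\<in>S. \<Sum>h\<in>{h\<in>H. h \<subseteq> S \<and> u \<in> h}. c h) \<le> real k * hyperedge_weight H c S" for S
  proof (cases "finite S")
    case True
    let ?HS = "{h\<in>H. h \<subseteq> S}"
    have "(\<Sum>u\<in>S. \<Sum>h\<in>{h\<in>H. h \<subseteq> S \<and> u \<in> h}. c h)
        = (\<Sum>u\<in>S. \<Sum>h\<in>{h. h \<in> ?HS \<and> u \<in> h}. c h)"
      by (simp add: conj_assoc)
    also have "\<dots> = (\<Sum>h\<in>?HS. \<Sum>u\<in>{u. u \<in> S \<and> u \<in> h}. c h)"
      using H True by (intro sum.swap_restrict) auto
    also have "\<dots> = (\<Sum>h\<in>?HS. real (card h) * c h)"
      by (intro sum.cong refl) (simp add: Int_absorb1 Collect_conj_eq[symmetric] Int_def[symmetric])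
    also have "\<dots> \<le> (\<Sum>h\<in>?HS. real k * c h)"
      using rank c by (intro sum_mono mult_right_mono) auto
    finally show ?thesis by (simp add: hyperedge_weight_def sum_distrib_left)
  next
    case False
    then show ?thesis using nonneg rank by simp
  qed
qed

lemma simple_graph_edge:
  assumes "simple_graph V E" and "e \<in> E"
  shows "e \<subseteq> V" and "card e = 2"
  using assms by (auto simp: simple_graph_def)

lemma rank_bounded_supermodular_typeA_weight:
  assumes G: "simple_graph V E" and a: "\<forall>i\<in>V. 0 \<le> a i" and c: "\<forall>e\<in>E. 0 \<le> c e"
  shows "rank_bounded_supermodular V 2 (typeA_weight E a c)"
proof -
  have V: "finite V" using G by (simp add: simple_graph_def)
  then have "finite E"
    using simple_graph_edge(1)[OF G] by (meson Pow_iff finite_Pow_iff finite_subset subsetI)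
  then have "rank_bounded_supermodular V 2 (hyperedge_weight E c)"
    using simple_graph_edge(2)[OF G] c by (intro rank_bounded_supermodular_hyperedge_weight) force+
  moreover have "typeA_weight E a c = (\<lambda>S. (\<Sum>i\<in>S. a i) + hyperedge_weight E c S)"
    by (simp add: fun_eq_iff typeA_weight_def hyperedge_weight_def)
  ultimately show ?thesis
    using rank_bounded_supermodular_add rank_bounded_supermodular_vertex_sum[OF V a, of 2] by simp
qed

lemma rank_bounded_supermodular_clique_count:
  assumes G: "simple_graph V E" and k: "2 \<le> k"
  shows "rank_bounded_supermodular V k (clique_count E k)"
proof -
  define H where "H = {K. card K = k \<and> (\<forall>x\<in>K. \<forall>y\<in>K. x \<noteq> y \<longrightarrow> {x, y} \<in> E)}"
  \<comment> \<open>For \<open>k \<ge> 2\<close> every vertex of a clique has a neighbour in it, so cliques lie in V.\<close>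
  have "K \<subseteq> V" if "K \<in> H" for K
  proof
    fix x assume x: "x \<in> K"
    have "\<not> K \<subseteq> {x}"
      using card_mono[of "{x}" K] that k by (auto simp: H_def)
    then obtain y where "y \<in> K" "y \<noteq> x" by blast
    then have "{x, y} \<in> E" using x that by (auto simp: H_def)
    then show "x \<in> V" using simple_graph_edge(1)[OF G] by blast
  qed
  then have "finite H"
    using G by (meson Pow_iff finite_Pow_iff finite_subset simple_graph_def subsetI)
  moreover have "\<forall>h\<in>H. h \<noteq> {} \<and> card h \<le> k" using k by (auto simp: H_def)
  ultimately have "rank_bounded_supermodular V k (hyperedge_weight H (\<lambda>_. 1))"
    by (intro rank_bounded_supermodular_hyperedge_weight) auto
  moreover have "clique_count E k = hyperedge_weight H (\<lambda>_. 1)"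
    by (auto simp: fun_eq_iff clique_count_def hyperedge_weight_def H_def
        intro!: arg_cong[where f = card])
  ultimately show ?thesis by simp
qed

lemma lpo_step_main:
  "S \<noteq> {} \<Longrightarrow> lpo_step f k \<epsilon> (True, S, t) =
    (False, S - {u \<in> S. peel_weight f S u \<le> max (max t (density f S / (real k * (1 + \<epsilon>))))
                                                   (real k * (1 + \<epsilon>) * density f S)},
     max t (density f S / (real k * (1 + \<epsilon>))))"
  by (simp add: lpo_step_def Let_def)

lemma lpo_step_trim:
  "\<exists>u\<in>S. peel_weight f S u < density f S \<Longrightarrow> lpo_step f k \<epsilon> (False, S, t) =
    (False, S - {u \<in> S. peel_weight f S u < max t (density f S)}, t)"
  by (simp add: lpo_step_def Let_def)

lemma lpo_step_trim_exit:
  "\<not> (\<exists>u\<in>S. peel_weight f S u < density f S) \<Longrightarrow> lpo_step f k \<epsilon> (False, S, t) = (True, S, t)"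
  by (simp add: lpo_step_def)

lemma lpo_step_subset: "fst (snd (lpo_step f k \<epsilon> st)) \<subseteq> fst (snd st)"
  by (cases st) (auto simp: lpo_step_def Let_def)

lemma lpo_run_0: "lpo_run f k \<epsilon> V 0 = (True, V, 0)"
  by (simp add: lpo_run_def)

lemma lpo_run_Suc: "lpo_run f k \<epsilon> V (Suc n) = lpo_step f k \<epsilon> (lpo_run f k \<epsilon> V n)"
  by (simp add: lpo_run_def)

lemma lpo_run_subset: "fst (snd (lpo_run f k \<epsilon> V n)) \<subseteq> V"
  by (induction n) (auto simp: lpo_run_0 lpo_run_Suc dest: subsetD[OF lpo_step_subset])

(* Termination measure: a main step removes a vertex and enters the trimming phase, a trimming
   step removes a vertex or returns to the main phase with the same set. *)
definition lpo_measure :: "bool \<times> 'a set \<times> real \<Rightarrow> nat" where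
  "lpo_measure st = 2 * card (fst (snd st)) + (if fst st then 0 else 1)"

definition densest_subset :: "'a set \<Rightarrow> ('a set \<Rightarrow> real) \<Rightarrow> 'a set \<Rightarrow> bool" where
  "densest_subset V f D \<longleftrightarrow> D \<subseteq> V \<and> D \<noteq> {} \<and>
     (\<forall>S. S \<subseteq> V \<and> S \<noteq> {} \<longrightarrow> density f S \<le> density f D)"

locale local_peeling =
  fixes V :: "'a set" and f :: "'a set \<Rightarrow> real" and k :: nat and \<epsilon> :: real
  assumes finite_V: "finite V"
    and weight: "rank_bounded_supermodular V k f"
    and k_pos: "0 < k"
    and eps_nonneg: "0 \<le> \<epsilon>"
begin

lemma finite_subset_V: "S \<subseteq> V \<Longrightarrow> finite S"
  using finite_V finite_subset by blast

lemma weight_empty: "f {} = 0"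
  and weight_nonneg: "S \<subseteq> V \<Longrightarrow> 0 \<le> f S"
  and peel_weight_mono: "A \<subseteq> B \<Longrightarrow> B \<subseteq> V \<Longrightarrow> u \<in> A \<Longrightarrow> peel_weight f A u \<le> peel_weight f B u"
  and sum_peel_weight_le: "S \<subseteq> V \<Longrightarrow> (\<Sum>u\<in>S. peel_weight f S u) \<le> real k * f S"
  using weight by (auto simp: rank_bounded_supermodular_def)

lemma density_nonneg: "S \<subseteq> V \<Longrightarrow> 0 \<le> density f S"
  by (simp add: density_def weight_nonneg)

lemma weight_eq_density: "S \<subseteq> V \<Longrightarrow> f S = density f S * card S"
  by (cases "S = {}") (auto simp: density_def weight_empty finite_subset_V)

lemma exists_small_peel_weight:
  assumes SV: "S \<subseteq> V" and "S \<noteq> {}"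
  shows "\<exists>u\<in>S. peel_weight f S u \<le> real k * density f S"
proof (rule ccontr)
  assume "\<not> ?thesis"
  then have "(\<Sum>u\<in>S. real k * density f S) < (\<Sum>u\<in>S. peel_weight f S u)"
    using assms finite_subset_V by (intro sum_strict_mono) auto
  also have "\<dots> \<le> real k * f S" using sum_peel_weight_le[OF SV] .
  also have "\<dots> = (\<Sum>u\<in>S. real k * density f S)" using weight_eq_density[OF SV] by simp
  finally show False by simp
qed

lemma densest_subset_weight_le:
  assumes D: "densest_subset V f D" and TV: "T \<subseteq> V"
  shows "f T \<le> density f D * card T"
proof (cases "T = {}")
  case False
  then have "density f T \<le> density f D" using D TV by (simp add: densest_subset_def)
  then show ?thesis using weight_eq_density[OF TV] by (simp add: mult_right_mono)
qed (simp add: weight_empty)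

lemma densest_subset_peel_weight_ge:
  assumes D: "densest_subset V f D" and u: "u \<in> D" and DS: "D \<subseteq> S" and SV: "S \<subseteq> V"
  shows "density f D \<le> peel_weight f S u"
proof -
  have DV: "D \<subseteq> V" using D by (simp add: densest_subset_def)
  have "card D = card (D - {u}) + 1"
    using u finite_subset_V[OF DV] by (metis card.remove Suc_eq_plus1)
  then have "density f D = f D - density f D * card (D - {u})"
    using weight_eq_density[OF DV] by (simp add: algebra_simps)
  also have "\<dots> \<le> peel_weight f D u"
    using densest_subset_weight_le[OF D, of "D - {u}"] DV by (auto simp: peel_weight_def)
  also have "\<dots> \<le> peel_weight f S u" using peel_weight_mono[OF DS SV u] .
  finally show ?thesis .
qed

lemma card_less_of_subset_remove: "S \<subseteq> V \<Longrightarrow> u \<in> S \<Longrightarrow> T \<subseteq> S - {u} \<Longrightarrow> card T < card S"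
  using card_mono card_Diff1_less finite_subset_V by (metis finite_Diff le_less_trans)

lemma lpo_measure_step_less:
  assumes SV: "S \<subseteq> V" and active: "\<not> (main \<and> S = {})"
  shows "lpo_measure (lpo_step f k \<epsilon> (main, S, t)) < lpo_measure (main, S, t)"
proof (cases main)
  case True
  then have "S \<noteq> {}" using active by simp
  then obtain u where u: "u \<in> S" and small: "peel_weight f S u \<le> real k * density f S"
    using exists_small_peel_weight[OF SV] by blast
  have "0 \<le> real k * \<epsilon> * density f S" using density_nonneg[OF SV] eps_nonneg by simp
  then have "real k * density f S \<le> real k * (1 + \<epsilon>) * density f S" by (simp add: ring_distribs)
  then have "fst (snd (lpo_step f k \<epsilon> (main, S, t))) \<subseteq> S - {u}"
    using True \<open>S \<noteq> {}\<close> u small by (auto simp: lpo_step_main)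
  then have "card (fst (snd (lpo_step f k \<epsilon> (main, S, t)))) < card S"
    using card_less_of_subset_remove[OF SV u] by blast
  then show ?thesis using True \<open>S \<noteq> {}\<close> by (simp add: lpo_measure_def lpo_step_main)
next
  case trimming: False
  show ?thesis
  proof (cases "\<exists>u\<in>S. peel_weight f S u < density f S")
    case True
    then obtain u where u: "u \<in> S" and "peel_weight f S u < density f S" by blast
    then have "fst (snd (lpo_step f k \<epsilon> (main, S, t))) \<subseteq> S - {u}"
      using trimming True by (auto simp: lpo_step_trim)
    then have "card (fst (snd (lpo_step f k \<epsilon> (main, S, t)))) < card S"
      using card_less_of_subset_remove[OF SV u] by blast
    then show ?thesis using trimming True by (simp add: lpo_measure_def lpo_step_trim)
  next
    case False
    then show ?thesis using trimming by (simp add: lpo_measure_def lpo_step_trim_exit)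
  qed
qed

lemma lpo_run_eventually_empty: "\<exists>n. fst (snd (lpo_run f k \<epsilon> V n)) = {}"
proof -
  let ?R = "lpo_run f k \<epsilon> V"
  have "fst (snd (?R n)) = {} \<or> n + lpo_measure (?R n) \<le> lpo_measure (?R 0)" for n
  proof (induction n)
    case (Suc n)
    obtain main S t where Rn: "?R n = (main, S, t)" by (cases "?R n")
    show ?case
    proof (cases "S = {}")
      case True
      then show ?thesis using lpo_step_subset[of f k \<epsilon> "?R n"] Rn by (simp add: lpo_run_Suc)
    next
      case False
      then have "lpo_measure (?R (Suc n)) < lpo_measure (?R n)"
        using lpo_measure_step_less lpo_run_subset[of f k \<epsilon> V n] Rn by (simp add: lpo_run_Suc)
      then show ?thesis using Suc False Rn by simp
    qed
  qed simp
  from this[of "Suc (lpo_measure (?R 0))"] show ?thesis by auto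
qed

lemma lpo_run_tau_max_le:
  assumes D: "densest_subset V f D"
  shows "snd (snd (lpo_run f k \<epsilon> V n)) \<le> density f D"
proof (induction n)
  case 0
  show ?case using D density_nonneg by (simp add: lpo_run_0 densest_subset_def)
next
  case (Suc n)
  obtain main S t where Rn: "lpo_run f k \<epsilon> V n = (main, S, t)" by (cases "lpo_run f k \<epsilon> V n")
  have SV: "S \<subseteq> V" using lpo_run_subset[of f k \<epsilon> V n] Rn by simp
  have t: "t \<le> density f D" using Suc Rn by simp
  show ?case
  proof (cases "main \<and> S \<noteq> {}")
    case True
    have scale: "1 \<le> real k * (1 + \<epsilon>)"
      using k_pos eps_nonneg mult_mono[of 1 "real k" 1 "1 + \<epsilon>"] by simp
    then have "density f S \<le> density f S * (real k * (1 + \<epsilon>))"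
      using mult_left_mono[OF scale density_nonneg[OF SV]] by simp
    then have "density f S / (real k * (1 + \<epsilon>)) \<le> density f S"
      using scale by (simp add: divide_le_eq)
    moreover have "density f S \<le> density f D" using D SV True by (simp add: densest_subset_def)
    ultimately show ?thesis using True Rn t by (simp add: lpo_run_Suc lpo_step_main)
  next
    case False
    then show ?thesis using Rn t by (cases main) (auto simp: lpo_run_Suc lpo_step_def Let_def)
  qed
qed

lemma lpo_run_trim_keeps_densest:
  assumes D: "densest_subset V f D"
    and DS: "D \<subseteq> fst (snd (lpo_run f k \<epsilon> V n))" and trimming: "\<not> fst (lpo_run f k \<epsilon> V n)"
  shows "D \<subseteq> fst (snd (lpo_run f k \<epsilon> V (Suc n)))"
proof -
  obtain S t where Rn: "lpo_run f k \<epsilon> V n = (False, S, t)"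
    using trimming by (cases "lpo_run f k \<epsilon> V n") auto
  have SV: "S \<subseteq> V" using lpo_run_subset[of f k \<epsilon> V n] Rn by simp
  have DS': "D \<subseteq> S" using DS Rn by simp
  show ?thesis
  proof (cases "\<exists>u\<in>S. peel_weight f S u < density f S")
    case True
    have "S \<noteq> {}" using D DS' by (auto simp: densest_subset_def)
    then have "max t (density f S) \<le> density f D"
      using D SV lpo_run_tau_max_le[OF D, of n] Rn by (simp add: densest_subset_def)
    then have "\<not> peel_weight f S u < max t (density f S)" if "u \<in> D" for u
      using densest_subset_peel_weight_ge[OF D that DS' SV] by linarith
    then show ?thesis using True DS' Rn by (auto simp: lpo_run_Suc lpo_step_trim)
  next
    case False
    then show ?thesis using DS' Rn by (simp add: lpo_run_Suc lpo_step_trim_exit)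
  qed
qed

end

theorem lemma5p4:
  fixes V :: "'a set" and E :: "'a set set" and f :: "'a set \<Rightarrow> real"
    and k :: nat and \<epsilon> :: real and Sstar :: "'a set"
  assumes graph: "simple_graph V E"
    and weight: "(k = 2 \<and> (\<exists>a c. (\<forall>i\<in>V. a i \<ge> 0) \<and> (\<forall>e\<in>E. c e \<ge> 0) \<and>
                                  f = typeA_weight E a c))
               \<or> (k \<ge> 3 \<and> f = clique_count E k)"
    and eps: "\<epsilon> \<ge> 0"
    and Sstar_sub: "Sstar \<subseteq> V" and Sstar_ne: "Sstar \<noteq> {}"
    and Sstar_opt: "\<forall>S. S \<subseteq> V \<and> S \<noteq> {} \<longrightarrow> density f S \<le> density f Sstar"
  shows "(\<exists>n. Sstar \<subseteq> fst (snd (lpo_run f k \<epsilon> V n)) \<and>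
              \<not> Sstar \<subseteq> fst (snd (lpo_run f k \<epsilon> V (Suc n))))
       \<and> (\<forall>n. Sstar \<subseteq> fst (snd (lpo_run f k \<epsilon> V n)) \<and>
              \<not> Sstar \<subseteq> fst (snd (lpo_run f k \<epsilon> V (Suc n)))
              \<longrightarrow> fst (lpo_run f k \<epsilon> V n))"
proof -
  have "rank_bounded_supermodular V k f" and "0 < k"
    using weight rank_bounded_supermodular_typeA_weight[OF graph]
      rank_bounded_supermodular_clique_count[OF graph]
    by auto
  then interpret local_peeling V f k \<epsilon>
    using graph eps by unfold_locales (simp_all add: simple_graph_def)
  let ?S = "\<lambda>n. fst (snd (lpo_run f k \<epsilon> V n))"
  have densest: "densest_subset V f Sstar"
    using Sstar_sub Sstar_ne Sstar_opt by (simp add: densest_subset_def)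
  obtain N where "?S N = {}" using lpo_run_eventually_empty by blast
  then have "\<not> Sstar \<subseteq> ?S N" using Sstar_ne by blast
  moreover have "Sstar \<subseteq> ?S 0" using Sstar_sub by (simp add: lpo_run_0)
  ultimately have "\<exists>n. Sstar \<subseteq> ?S n \<and> \<not> Sstar \<subseteq> ?S (Suc n)"
    by (induction N) auto
  then show ?thesis
    using lpo_run_trim_keeps_densest[OF densest] by blast
qed

end
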